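(* Let $\mathcal{S}$ be a space of geometric source conditions and $\mathcal{Z}$ the space of molecular configurations, and let $C:\mathcal{S}\times\mathcal{Z}\to\mathcal{Z}$ be a function. Suppose that, for every rigid transformation $G$ (rotations and translations of 3D space, acting on the coordinate parts of configurations and on source conditions), $C$ is invariant in its first argument, i.e. $C(G\mathbf{s},\mathbf{z})=C(\mathbf{s},\mathbf{z})$, and equivariant in its second argument, i.e. $C(\mathbf{s},G\mathbf{z})=G\,C(\mathbf{s},\mathbf{z})$, for all $\mathbf{s}\in\mathcal{S}$, $\mathbf{z}\in\mathcal{Z}$. Define $\mathbf{v}=\mathbf{z}-C(\mathbf{s},\mathbf{z})$. Then the gradient $\nabla_{\mathbf{z}}\lVert\mathbf{v}\rVert_2^2=\nabla_{\mathbf{z}}\lVert\mathbf{z}-C(\mathbf{s},\mathbf{z})\rVert_2^2$ is equivariant to (such rigid) transformations of $\mathbf{z}$.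
   Context: A configuration of $N$ nodes (atoms or residues) is $\mathbf{z}=\{(\mathbf{x}_i,\mathbf{h}_i)\}_{i=1}^N$ with coordinates $\mathbf{x}_i\in\mathbb{R}^3$ and features $\mathbf{h}_i\in\mathbb{R}^d$; $\mathcal{Z}$ denotes the space of such configurations (of varying size $N$), viewed as points of $\mathbb{R}^{N\times(3+d)}$. Rigid transformations $G$ act on configurations by acting on all coordinates $\mathbf{x}_i$ (features unchanged). $\mathcal{S}$ is a general space of geometric objects (e.g. structures, surfaces, point clouds) on which rigid transformations also act. A map $F$ is equivariant to $G$ if $F(G\mathbf{z})=G\,F(\mathbf{z})$ and invariant if $F(G\mathbf{z})=F(\mathbf{z})$. *)

theory Defs
  imports "HOL-Analysis.Analysis"
begin

text \<open>A configuration of N nodes with coordinates in R^3 and features in R^d is an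
  element of (R^3 x R^d)^N, with the Euclidean (Frobenius) inner product; the node
  count N and the feature dimension d are finite index types.\<close>

definition rotation :: "real^3^3 \<Rightarrow> bool" where
  "rotation R \<longleftrightarrow> orthogonal_matrix R \<and> det R = 1"

definition act_cfg :: "real^3^3 \<Rightarrow> real^3 \<Rightarrow> ((real^3) \<times> (real^'d))^'n \<Rightarrow> ((real^3) \<times> (real^'d))^'n" where
  "act_cfg R t z = (\<chi> i. (R *v fst (z $ i) + t, snd (z $ i)))"

text \<open>Induced action on (co)tangent vectors, i.e. on gradients: the linear part only.\<close>
definition act_vec :: "real^3^3 \<Rightarrow> ((real^3) \<times> (real^'d))^'n \<Rightarrow> ((real^3) \<times> (real^'d))^'n" where
  "act_vec R g = (\<chi> i. (R *v fst (g $ i), snd (g $ i)))"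

definition has_gradient :: "('a::real_inner \<Rightarrow> real) \<Rightarrow> 'a \<Rightarrow> 'a \<Rightarrow> bool" where
  "has_gradient f g z \<longleftrightarrow> (f has_derivative (\<lambda>h. inner g h)) (at z)"

end

theory Submission
  imports Defs
begin

text \<open>If \<open>f\<close> is invariant under the affine isometry \<open>T x = L x + b\<close>, then \<open>f = f \<circ> T\<^sup>-\<^sup>1\<close>, so by the
  chain rule the gradient at \<open>T z\<close> is the gradient at \<open>z\<close> pulled back along \<open>L\<^sup>-\<^sup>1\<close>; as \<open>L\<close> is
  orthogonal, its inverse is its adjoint, i.e. the gradient is simply transported by \<open>L\<close>.
  For the squared residual \<open>\<parallel>z - C s z\<parallel>\<^sup>2\<close> this invariance holds for every rigid motion,
  because equivariance of \<open>C s\<close> turns the residual at \<open>G z\<close> into the rotated residual at \<open>z\<close>.\<close>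

lemma has_gradient_orthogonal_invariant:
  fixes f :: "'a::euclidean_space \<Rightarrow> real"
  assumes L: "orthogonal_transformation L"
    and f_invariant: "\<And>w. f (L w + b) = f w"
    and grad: "has_gradient f g z"
  shows "has_gradient f (L g) (L z + b)"
proof -
  define T' where "T' = (\<lambda>u. inv L (u - b))"
  have L_T': "L (T' u) + b = u" for u
    using orthogonal_transformation_surj[OF L] by (simp add: T'_def surj_f_inv_f)
  have f_eq: "f = (\<lambda>u. f (T' u))"
    using f_invariant L_T' by metis
  have T'_z: "T' (L z + b) = z"
    using orthogonal_transformation_inj[OF L] by (simp add: T'_def)
  have "linear (inv L)"
    using orthogonal_transformation_inv[OF L] by (rule orthogonal_transformation_linear)
  then have inv_L: "bounded_linear (inv L)"
    by (simp add: linear_conv_bounded_linear)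
  have "((\<lambda>u. inv L (u - b)) has_derivative (\<lambda>h. inv L (h - 0))) (at (L z + b))"
    by (rule bounded_linear.has_derivative[OF inv_L
          has_derivative_diff[OF has_derivative_ident has_derivative_const]])
  then have "(T' has_derivative inv L) (at (L z + b))"
    by (simp add: T'_def)
  moreover have "(f has_derivative (\<lambda>h. inner g h)) (at (T' (L z + b)))"
    using grad T'_z by (simp add: has_gradient_def)
  ultimately have "((\<lambda>u. f (T' u)) has_derivative (\<lambda>h. inner g (inv L h))) (at (L z + b))"
    by (rule has_derivative_compose)
  moreover have "inner g (inv L h) = inner (L g) h" for h
  proof -
    have "inner g (inv L h) = inner (L g) (L (inv L h))"
      using L by (simp add: orthogonal_transformation_def)
    also have "\<dots> = inner (L g) h"
      using orthogonal_transformation_surj[OF L] by (simp add: surj_f_inv_f)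
    finally show ?thesis .
  qed
  ultimately show ?thesis
    using f_eq by (simp add: has_gradient_def)
qed

lemma orthogonal_transformation_matrix_vector_mult:
  fixes R :: "real^'n^'n"
  assumes "orthogonal_matrix R"
  shows "orthogonal_transformation (\<lambda>x. R *v x)"
  using assms orthogonal_transformation_matrix[of "\<lambda>x. R *v x"]
  by (simp add: matrix_vector_mul_linear matrix_of_matrix_vector_mul)

lemma orthogonal_transformation_act_vec:
  assumes "orthogonal_matrix R"
  shows "orthogonal_transformation (act_vec R :: ((real^3) \<times> (real^'d))^'n \<Rightarrow> _)"
proof -
  have "linear (act_vec R :: ((real^3) \<times> (real^'d))^'n \<Rightarrow> _)"
    by (rule linearI) (simp_all add: act_vec_def vec_eq_iff matrix_vector_right_distrib
        matrix_vector_mult_scaleR)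
  moreover have "inner (R *v x) (R *v y) = inner x y" for x y
    using orthogonal_transformation_matrix_vector_mult[OF assms]
    by (simp add: orthogonal_transformation_def)
  ultimately show ?thesis
    by (simp add: orthogonal_transformation_def act_vec_def inner_vec_def inner_prod_def)
qed

lemma act_cfg_eq_act_vec_add: "act_cfg R t w = act_vec R w + act_cfg R t 0"
  by (simp add: act_cfg_def act_vec_def vec_eq_iff)

lemma act_cfg_diff: "act_cfg R t w - act_cfg R t v = act_vec R (w - v)"
  by (simp add: act_cfg_def act_vec_def vec_eq_iff matrix_vector_mult_diff_distrib)

lemma norm_residual_act_cfg:
  assumes "orthogonal_matrix R"
    and C_equivariant: "\<And>w. C (act_cfg R t w) = act_cfg R t (C w)"
  shows "norm (act_cfg R t w - C (act_cfg R t w)) = norm (w - C w)"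
  using orthogonal_transformation_norm[OF orthogonal_transformation_act_vec[OF assms(1)]]
  by (simp add: C_equivariant act_cfg_diff)

theorem theorem1:
  fixes C :: "'s \<Rightarrow> ((real^3) \<times> (real^'d))^'n \<Rightarrow> ((real^3) \<times> (real^'d))^'n"
    and act_S :: "real^3^3 \<Rightarrow> real^3 \<Rightarrow> 's \<Rightarrow> 's"
  assumes inv: "\<forall>R t s z. rotation R \<longrightarrow> C (act_S R t s) z = C s z"
    and equiv: "\<forall>R t s z. rotation R \<longrightarrow> C s (act_cfg R t z) = act_cfg R t (C s z)"
  shows "\<forall>R t s z g. rotation R \<longrightarrow>
           has_gradient (\<lambda>w. (norm (w - C s w))\<^sup>2) g z \<longrightarrow>
           has_gradient (\<lambda>w. (norm (w - C s w))\<^sup>2) (act_vec R g) (act_cfg R t z)"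
proof (intro allI impI)
  \<comment> \<open>The source \<open>s\<close> stays fixed.\<close>
  fix R t s z g
  assume "rotation R" and grad: "has_gradient (\<lambda>w. (norm (w - C s w))\<^sup>2) g z"
  then have R: "orthogonal_matrix R"
    by (simp add: rotation_def)
  have "(norm (act_vec R w + act_cfg R t 0 - C s (act_vec R w + act_cfg R t 0)))\<^sup>2
      = (norm (w - C s w))\<^sup>2" for w
    using norm_residual_act_cfg[OF R, of "C s" t w] equiv \<open>rotation R\<close>
    by (simp add: act_cfg_eq_act_vec_add[symmetric])
  from has_gradient_orthogonal_invariant[OF orthogonal_transformation_act_vec[OF R] this grad]
  show "has_gradient (\<lambda>w. (norm (w - C s w))\<^sup>2) (act_vec R g) (act_cfg R t z)"
    by (simp add: act_cfg_eq_act_vec_add[symmetric])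
qed

end
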